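(* Let $\mathbf{X}$ be a real random variable with finite support $\{v_1,\dots,v_\ell\}$, taking value $v_i$ with probability $\alpha_i>0$, and let $\alpha=\min_i\alpha_i$. Let $p,q:\mathbb{R}^k\to\mathbb{R}$ be two functions such that the distributions of $p(\mathbf{X}^{\otimes k})$ and $q(\mathbf{X}^{\otimes k})$ are identical. Then any algorithm which, given access to independent noiseless labeled examples $(\mathbf{x},r(\mathbf{x}))$ with $\mathbf{x}\sim\mathbf{X}^{\otimes n}$, correctly (with high confidence) distinguishes between the two possibilities that $r(x)=p(x_{i_1},\dots,x_{i_k})$ for some $i_1,\dots,i_k\in[n]$, versus $r(x)=q(x_{i_1},\dots,x_{i_k})$ for some $i_1,\dots,i_k\in[n]$, must use $m=\Omega_{k,\ell,\alpha}(\log n)$ samples.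
   Context: $\mathbf{X}^{\otimes n}$ denotes a vector of $n$ i.i.d. copies of $\mathbf{X}$. The quantities $k,\ell,\alpha$ do not depend on $n$. *)

theory Defs
  imports "HOL-Probability.Probability"
begin

definition labeled_examples ::
  "nat \<Rightarrow> nat \<Rightarrow> real pmf \<Rightarrow> (real list \<Rightarrow> real) \<Rightarrow> (real list \<times> real) list pmf" where
  "labeled_examples m n X r = replicate_pmf m (map_pmf (\<lambda>x. (x, r x)) (replicate_pmf n X))"

text \<open>Labeling functions of the form x \<mapsto> f(x_{i_1},...,x_{i_k}) with i_1,...,i_k in [n]
  (indices are 0-based here: i_j < n).\<close>
definition junta_class :: "nat \<Rightarrow> nat \<Rightarrow> (real list \<Rightarrow> real) \<Rightarrow> (real list \<Rightarrow> real) set" where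
  "junta_class n k f = {r. \<exists>is. length is = k \<and> set is \<subseteq> {..<n} \<and> r = (\<lambda>x. f (map (\<lambda>i. x ! i) is))}"

text \<open>A randomized algorithm A, fed m labeled examples, outputs True ("p") or False ("q").\<close>
definition distinguishes ::
  "nat \<Rightarrow> nat \<Rightarrow> nat \<Rightarrow> real pmf \<Rightarrow> (real list \<Rightarrow> real) \<Rightarrow> (real list \<Rightarrow> real)
     \<Rightarrow> ((real list \<times> real) list \<Rightarrow> bool pmf) \<Rightarrow> bool" where
  "distinguishes m n k X p q A \<longleftrightarrow>
     (\<forall>r \<in> junta_class n k p. pmf (bind_pmf (labeled_examples m n X r) A) True \<ge> 2/3) \<and>
     (\<forall>r \<in> junta_class n k q. pmf (bind_pmf (labeled_examples m n X r) A) False \<ge> 2/3)"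

end

theory Submission
  imports Defs
begin

(* Split the n coordinates into t = n div k disjoint blocks of length k and let the hidden
  labeling read block b through p or through q. A distinguisher gains advantage 1/3 on every block,
  so its total advantage is at least t/3. Conditioning on the m label values y, the advantage is
  bounded by the sum over y of the expectation of |Z_y|, where Z_y is the sum over the blocks of the
  difference of the events "block b labels the sample by y via p" and "... via q". Since p and q
  push the block distribution forward to the same law and distinct blocks are independent, these
  differences are orthogonal, so the expectation of |Z_y| is at most sqrt t. With at most
  (2 l^k)^m label vectors y this gives t/3 <= (2 l^k)^m sqrt t, i.e. n = O(k (2 l^k)^(2m)). *)

lemma replicate_pmf_map_pmf:
  "replicate_pmf m (map_pmf f p) = map_pmf (map f) (replicate_pmf m p)"
  by (induction m) (simp_all add: map_pmf_def bind_assoc_pmf bind_return_pmf)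

lemma pmf_replicate_pmf:
  "pmf (replicate_pmf m p) xs = (if length xs = m then prod_list (map (pmf p) xs) else 0)"
proof (induction m arbitrary: xs)
  case 0
  then show ?case by (cases xs) auto
next
  case (Suc m)
  show ?case
  proof (cases xs)
    case Nil
    then show ?thesis by (simp add: pmf_eq_0_set_pmf set_replicate_pmf del: replicate_pmf.simps)
  next
    case (Cons a xs')
    have "replicate_pmf (Suc m) p = map_pmf (\<lambda>(x, xs). x # xs) (pair_pmf p (replicate_pmf m p))"
      by (simp add: pair_pmf_def map_pmf_def bind_assoc_pmf bind_return_pmf)
    moreover have "inj (\<lambda>(x::'a, xs). x # xs)" by (auto simp: inj_def)
    ultimately have "pmf (replicate_pmf (Suc m) p) xs = pmf (pair_pmf p (replicate_pmf m p)) (a, xs')"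
      unfolding Cons using pmf_map_inj'[of "\<lambda>(x, xs). x # xs" _ "(a, xs')"] by simp
    then show ?thesis using Suc Cons by (simp add: pmf_pair)
  qed
qed

lemma set_replicate_pmf_eq: "set_pmf (replicate_pmf k p) = {xs. set xs \<subseteq> set_pmf p \<and> length xs = k}"
  by (auto simp: set_replicate_pmf)

lemma finite_set_replicate_pmf: "finite (set_pmf p) \<Longrightarrow> finite (set_pmf (replicate_pmf k p))"
  unfolding set_replicate_pmf_eq by (rule finite_lists_length_eq)

lemma card_set_replicate_pmf:
  "finite (set_pmf p) \<Longrightarrow> card (set_pmf (replicate_pmf k p)) = card (set_pmf p) ^ k"
  unfolding set_replicate_pmf_eq by (rule card_lists_length_eq)

lemma expectation_indicator_eq_pmf:
  "measure_pmf.expectation M (\<lambda>x. if g x = z then 1 else 0 :: real) = pmf (map_pmf g M) z"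
proof -
  have "(\<lambda>x. if g x = z then 1 else 0 :: real) = indicator (g -` {z})"
    by (auto simp: indicator_def)
  then show ?thesis by (simp add: pmf_map)
qed

lemma expectation_abs_sum_orthogonal_le_sqrt:
  fixes W :: "nat \<Rightarrow> 'a \<Rightarrow> real"
  assumes fin: "finite (set_pmf M)"
    and orth: "\<And>b b'. b < t \<Longrightarrow> b' < t \<Longrightarrow> b \<noteq> b' \<Longrightarrow> measure_pmf.expectation M (\<lambda>x. W b x * W b' x) = 0"
    and bounded: "\<And>b x. \<bar>W b x\<bar> \<le> 1"
  shows "measure_pmf.expectation M (\<lambda>x. \<bar>\<Sum>b<t. W b x\<bar>) \<le> sqrt t"
proof -
  have int: "integrable M f" for f :: "_ \<Rightarrow> real"
    using integrable_measure_pmf_finite[OF fin] .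
  have diagonal: "(\<Sum>b'<t. measure_pmf.expectation M (\<lambda>x. W b x * W b' x))
      = measure_pmf.expectation M (\<lambda>x. W b x * W b x)" if "b < t" for b
  proof -
    have "(\<Sum>b'<t. measure_pmf.expectation M (\<lambda>x. W b x * W b' x))
        = (\<Sum>b'<t. if b' = b then measure_pmf.expectation M (\<lambda>x. W b x * W b x) else 0)"
      using that orth by (intro sum.cong) auto
    then show ?thesis using that by simp
  qed
  have "measure_pmf.expectation M (\<lambda>x. (\<Sum>b<t. W b x)\<^sup>2)
      = (\<Sum>b<t. \<Sum>b'<t. measure_pmf.expectation M (\<lambda>x. W b x * W b' x))"
    by (simp add: power2_eq_square sum_product int)
  also have "\<dots> = (\<Sum>b<t. measure_pmf.expectation M (\<lambda>x. W b x * W b x))"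
    by (intro sum.cong refl diagonal) simp
  also have "\<dots> \<le> (\<Sum>b<t. measure_pmf.expectation M (\<lambda>x. 1))"
    using bounded by (intro sum_mono integral_mono int) (metis abs_mult_self_eq abs_ge_zero mult_le_one)
  finally have second_moment: "measure_pmf.expectation M (\<lambda>x. (\<Sum>b<t. W b x)\<^sup>2) \<le> t"
    by simp
  show ?thesis
  proof (cases "t = 0")
    case False
    define s where "s = sqrt t"
    have s: "s > 0" "s * s = t" using False by (auto simp: s_def)
    have am_gm: "\<bar>z\<bar> \<le> (z\<^sup>2 + t) / (2 * s)" for z :: real
    proof -
      have "0 \<le> (\<bar>z\<bar> - s)\<^sup>2" by simp
      then show ?thesis using s by (simp add: power2_eq_square field_simps)
    qed
    have "measure_pmf.expectation M (\<lambda>x. \<bar>\<Sum>b<t. W b x\<bar>)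
        \<le> measure_pmf.expectation M (\<lambda>x. ((\<Sum>b<t. W b x)\<^sup>2 + t) / (2 * s))"
      by (intro integral_mono int am_gm)
    also have "\<dots> = (measure_pmf.expectation M (\<lambda>x. (\<Sum>b<t. W b x)\<^sup>2) + t) / (2 * s)"
      by (simp add: int)
    also have "\<dots> \<le> (t + t) / (2 * s)"
      using second_moment s by (intro divide_right_mono) auto
    also have "\<dots> = s" using s by (simp add: field_simps)
    finally show ?thesis by (simp add: s_def)
  qed simp
qed

lemma mult_add_le_mult_if_less: "b < b' \<Longrightarrow> b * k + k \<le> b' * (k :: nat)"
  using mult_le_mono1[of "Suc b" b' k] by simp

definition block :: "nat \<Rightarrow> nat \<Rightarrow> 'a list \<Rightarrow> 'a list" where
  "block k i x = map ((!) x) [i..<i + k]"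

lemma block_append: "length u = i \<Longrightarrow> length v = k \<Longrightarrow> block k i (u @ v @ w) = v"
  unfolding block_def by (rule nth_equalityI) (auto simp: nth_append)

lemma block_in_set_replicate_pmf:
  "x \<in> set_pmf (replicate_pmf n p) \<Longrightarrow> i + k \<le> n \<Longrightarrow> block k i x \<in> set_pmf (replicate_pmf k p)"
  by (auto simp: set_replicate_pmf block_def)

lemma block_in_junta_class: "i + k \<le> n \<Longrightarrow> (\<lambda>x. f (block k i x)) \<in> junta_class n k f"
  unfolding junta_class_def block_def by (intro CollectI exI[of _ "[i..<i + k]"]) auto

lemma map_pmf_blocks_replicate_pmf:
  assumes "i + k \<le> j" "j + k' \<le> n"
  shows "map_pmf (\<lambda>x. (block k i x, block k' j x)) (replicate_pmf n p)
    = pair_pmf (replicate_pmf k p) (replicate_pmf k' p)"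
proof -
  define d where "d = j - i - k"
  define e where "e = n - j - k'"
  have n: "n = i + (k + (d + (k' + e)))" and j: "j = i + k + d"
    using assms by (auto simp: d_def e_def)
  have "map_pmf (\<lambda>x. (block k i x, block k' j x)) (replicate_pmf n p) =
    do {u \<leftarrow> replicate_pmf i p; v \<leftarrow> replicate_pmf k p; w \<leftarrow> replicate_pmf d p;
        z \<leftarrow> replicate_pmf k' p; s \<leftarrow> replicate_pmf e p;
        return_pmf (block k i (u @ v @ w @ z @ s), block k' j (u @ v @ w @ z @ s))}"
    unfolding n
    by (simp add: replicate_pmf_distrib bind_assoc_pmf bind_return_pmf map_bind_pmf
        del: replicate_pmf.simps)
  also have "\<dots> = do {u \<leftarrow> replicate_pmf i p; v \<leftarrow> replicate_pmf k p; w \<leftarrow> replicate_pmf d p;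
        z \<leftarrow> replicate_pmf k' p; s \<leftarrow> replicate_pmf e p; return_pmf (v, z)}"
  proof (intro bind_pmf_cong refl)
    fix u v w z s
    assume "u \<in> set_pmf (replicate_pmf i p)" "v \<in> set_pmf (replicate_pmf k p)"
      "w \<in> set_pmf (replicate_pmf d p)" "z \<in> set_pmf (replicate_pmf k' p)"
    then have "length u = i" "length v = k" "length (u @ v @ w) = j" "length z = k'"
      using j by (auto simp: set_replicate_pmf)
    then show "return_pmf (block k i (u @ v @ w @ z @ s), block k' j (u @ v @ w @ z @ s))
        = return_pmf (v, z)"
      using block_append[of "u @ v @ w" j z k' s] by (simp add: block_append)
  qed
  also have "\<dots> = pair_pmf (replicate_pmf k p) (replicate_pmf k' p)"
    by (simp add: pair_pmf_def del: replicate_pmf.simps)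
  finally show ?thesis .
qed

lemma map_pair_eq_map_diag:
  "map (\<lambda>x. (f x, g x)) xs = map (\<lambda>a. (a, a)) ys \<longleftrightarrow> map f xs = ys \<and> map g xs = ys"
proof (induction xs arbitrary: ys)
  case (Cons x xs)
  then show ?case by (cases ys) auto
qed auto

definition labels_indicator :: "nat \<Rightarrow> ('a list \<Rightarrow> 'b) \<Rightarrow> nat \<Rightarrow> 'b list \<Rightarrow> 'a list list \<Rightarrow> real" where
  "labels_indicator k F i y xs = (if map (\<lambda>x. F (block k i x)) xs = y then 1 else 0)"

definition label_discrepancy ::
  "nat \<Rightarrow> ('a list \<Rightarrow> 'b) \<Rightarrow> ('a list \<Rightarrow> 'b) \<Rightarrow> nat \<Rightarrow> 'b list \<Rightarrow> 'a list list \<Rightarrow> real" where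
  "label_discrepancy k p q i y xs = labels_indicator k p i y xs - labels_indicator k q i y xs"

lemma expectation_labels_indicator_mult:
  assumes "i + k \<le> j" "j + k \<le> n" "length y = m"
  shows "measure_pmf.expectation (replicate_pmf m (replicate_pmf n X))
      (\<lambda>xs. labels_indicator k F i y xs * labels_indicator k G j y xs)
    = (\<Prod>a\<leftarrow>y. pmf (map_pmf F (replicate_pmf k X)) a * pmf (map_pmf G (replicate_pmf k X)) a)"
proof -
  define \<theta> where "\<theta> = (\<lambda>x. (F (block k i x), G (block k j x)))"
  have "(\<lambda>xs. labels_indicator k F i y xs * labels_indicator k G j y xs)
      = (\<lambda>xs. if map \<theta> xs = map (\<lambda>a. (a, a)) y then 1 else 0)"
    unfolding labels_indicator_def \<theta>_def map_pair_eq_map_diag by auto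
  then have "measure_pmf.expectation (replicate_pmf m (replicate_pmf n X))
      (\<lambda>xs. labels_indicator k F i y xs * labels_indicator k G j y xs)
    = pmf (replicate_pmf m (map_pmf \<theta> (replicate_pmf n X))) (map (\<lambda>a. (a, a)) y)"
    by (simp add: expectation_indicator_eq_pmf replicate_pmf_map_pmf)
  also have "map_pmf \<theta> (replicate_pmf n X) = map_pmf (\<lambda>(u, v). (F u, G v))
      (map_pmf (\<lambda>x. (block k i x, block k j x)) (replicate_pmf n X))"
    by (simp add: map_pmf_comp \<theta>_def)
  also have "\<dots> = pair_pmf (map_pmf F (replicate_pmf k X)) (map_pmf G (replicate_pmf k X))"
    by (simp add: map_pmf_blocks_replicate_pmf[OF assms(1,2)] map_pair)
  finally show ?thesis
    using assms(3) by (simp add: pmf_replicate_pmf comp_def pmf_pair del: replicate_pmf.simps)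
qed

lemma expectation_label_discrepancy_orthogonal:
  assumes fin: "finite (set_pmf X)"
    and same_law: "map_pmf p (replicate_pmf k X) = map_pmf q (replicate_pmf k X)"
    and "i + k \<le> j" "j + k \<le> n" "length y = m"
  shows "measure_pmf.expectation (replicate_pmf m (replicate_pmf n X))
    (\<lambda>xs. label_discrepancy k p q i y xs * label_discrepancy k p q j y xs) = 0"
proof -
  have "integrable (replicate_pmf m (replicate_pmf n X)) h" for h :: "_ \<Rightarrow> real"
    using fin by (intro integrable_measure_pmf_finite finite_set_replicate_pmf)
  (* All four products have expectation \<Prod>a\<leftarrow>y. P a ^ 2 with P the common law of p and q on a block. *)
  then show ?thesis
    unfolding label_discrepancy_def left_diff_distrib right_diff_distrib
    using expectation_labels_indicator_mult[OF assms(3-5), where X = X]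
    by (simp add: same_law del: replicate_pmf.simps)
qed

lemma labeled_eq_sum_labels_indicator:
  assumes "finite Y" "map (\<lambda>x. F (block k i x)) xs \<in> Y"
  shows "h (map (\<lambda>x. (x, F (block k i x))) xs) = (\<Sum>y\<in>Y. h (zip xs y) * labels_indicator k F i y xs)"
proof -
  have "(\<Sum>y\<in>Y. h (zip xs y) * labels_indicator k F i y xs)
      = (\<Sum>y\<in>Y. if map (\<lambda>x. F (block k i x)) xs = y then h (zip xs y) else 0)"
    by (intro sum.cong) (auto simp: labels_indicator_def)
  also have "\<dots> = h (zip xs (map (\<lambda>x. F (block k i x)) xs))"
    using assms by (simp add: sum.delta)
  finally show ?thesis by (simp add: zip_map2 zip_same_conv_map comp_def)
qed

lemma pmf_bind_labeled_examples:
  "pmf (bind_pmf (labeled_examples m n X r) A) v =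
    measure_pmf.expectation (replicate_pmf m (replicate_pmf n X)) (\<lambda>xs. pmf (A (map (\<lambda>x. (x, r x)) xs)) v)"
  unfolding labeled_examples_def replicate_pmf_map_pmf pmf_bind by simp

lemma distinguishes_imp_junta_classes_disjoint:
  assumes "distinguishes m n k X p q A"
  shows "junta_class n k p \<inter> junta_class n k q = {}"
proof (rule ccontr)
  assume "junta_class n k p \<inter> junta_class n k q \<noteq> {}"
  then obtain r where "r \<in> junta_class n k p" "r \<in> junta_class n k q" by blast
  then have "2/3 \<le> pmf (bind_pmf (labeled_examples m n X r) A) True"
    "2/3 \<le> pmf (bind_pmf (labeled_examples m n X r) A) False"
    using assms unfolding distinguishes_def by blast+
  then show False by (simp add: pmf_False_conv_True)
qed

lemma not_distinguishes_arity_0: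
  assumes "map_pmf p (replicate_pmf 0 X) = map_pmf q (replicate_pmf 0 X)"
  shows "\<not> distinguishes m n 0 X p q A"
proof
  assume "distinguishes m n 0 X p q A"
  moreover have "p [] = q []" using assms by simp
  then have "(\<lambda>_. p []) \<in> junta_class n 0 p \<inter> junta_class n 0 q"
    by (auto simp: junta_class_def)
  ultimately show False using distinguishes_imp_junta_classes_disjoint by blast
qed

lemma distinguishes_block_advantage:
  assumes "distinguishes m n k X p q A" "i + k \<le> n"
  shows "1/3 \<le> measure_pmf.expectation (replicate_pmf m (replicate_pmf n X))
      (\<lambda>xs. pmf (A (map (\<lambda>x. (x, p (block k i x))) xs)) True)
    - measure_pmf.expectation (replicate_pmf m (replicate_pmf n X))
      (\<lambda>xs. pmf (A (map (\<lambda>x. (x, q (block k i x))) xs)) True)"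
proof -
  have "2/3 \<le> pmf (bind_pmf (labeled_examples m n X (\<lambda>x. p (block k i x))) A) True"
    "2/3 \<le> pmf (bind_pmf (labeled_examples m n X (\<lambda>x. q (block k i x))) A) False"
    using assms block_in_junta_class unfolding distinguishes_def by blast+
  then show ?thesis by (simp add: pmf_False_conv_True pmf_bind_labeled_examples)
qed

lemma labels_of_block_in_lists:
  assumes "xs \<in> set_pmf (replicate_pmf m (replicate_pmf n X))" "i + k \<le> n"
  shows "map (\<lambda>x. F (block k i x)) xs \<in> {y. set y \<subseteq> F ` set_pmf (replicate_pmf k X) \<and> length y = m}"
proof -
  have "length xs = m" "set xs \<subseteq> set_pmf (replicate_pmf n X)"
    using assms(1) by (auto simp: set_replicate_pmf)
  then show ?thesis using block_in_set_replicate_pmf[OF _ assms(2)] by auto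
qed

lemma expectation_label_discrepancy_blocks_orthogonal:
  assumes "finite (set_pmf X)"
    and "map_pmf p (replicate_pmf k X) = map_pmf q (replicate_pmf k X)"
    and "t * k \<le> n" "length y = m" "b < t" "b' < t" "b \<noteq> b'"
  shows "measure_pmf.expectation (replicate_pmf m (replicate_pmf n X))
    (\<lambda>xs. label_discrepancy k p q (b * k) y xs * label_discrepancy k p q (b' * k) y xs) = 0"
proof -
  let ?D = "\<lambda>b. label_discrepancy k p q (b * k) y"
  have "?D b xs * ?D b' xs = ?D (min b b') xs * ?D (max b b') xs" for xs
    by (cases "b \<le> b'") (simp_all add: min_def max_def)
  moreover have "min b b' * k + k \<le> max b b' * k"
    using \<open>b \<noteq> b'\<close> by (intro mult_add_le_mult_if_less) arith
  moreover have "max b b' * k + k \<le> n"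
    using mult_add_le_mult_if_less[of "max b b'" t k] assms(3,5,6) by simp
  ultimately show ?thesis
    using expectation_label_discrepancy_orthogonal[OF assms(1,2) _ _ assms(4)]
    by (simp del: replicate_pmf.simps)
qed

lemma sum_block_advantages_le_sum_abs_discrepancy:
  fixes h :: "('a list \<times> 'b) list \<Rightarrow> real"
  assumes "finite Y" and labels_in_Y: "\<And>b F. b < t \<Longrightarrow> F \<in> {p, q} \<Longrightarrow> map (\<lambda>x. F (block k (b * k) x)) xs \<in> Y"
    and "\<And>d. 0 \<le> h d" "\<And>d. h d \<le> 1"
  shows "(\<Sum>b<t. h (map (\<lambda>x. (x, p (block k (b * k) x))) xs) - h (map (\<lambda>x. (x, q (block k (b * k) x))) xs))
    \<le> (\<Sum>y\<in>Y. \<bar>\<Sum>b<t. label_discrepancy k p q (b * k) y xs\<bar>)"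
proof -
  let ?D = "\<lambda>y b. label_discrepancy k p q (b * k) y xs"
  have "(\<Sum>b<t. h (map (\<lambda>x. (x, p (block k (b * k) x))) xs) - h (map (\<lambda>x. (x, q (block k (b * k) x))) xs))
      = (\<Sum>b<t. \<Sum>y\<in>Y. h (zip xs y) * ?D y b)"
    using labels_in_Y \<open>finite Y\<close>
    by (intro sum.cong refl) (simp add: labeled_eq_sum_labels_indicator label_discrepancy_def
        right_diff_distrib sum_subtractf)
  also have "\<dots> = (\<Sum>y\<in>Y. h (zip xs y) * (\<Sum>b<t. ?D y b))"
    by (subst sum.swap) (simp add: sum_distrib_left)
  also have "\<dots> \<le> (\<Sum>y\<in>Y. \<bar>\<Sum>b<t. ?D y b\<bar>)"
    using assms(3,4)
    by (intro sum_mono) (meson abs_ge_self abs_ge_zero mult_left_le_one_le mult_left_mono order_trans)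
  finally show ?thesis .
qed

lemma sum_block_advantages_le:
  fixes h :: "('a list \<times> 'b) list \<Rightarrow> real" and p q :: "'a list \<Rightarrow> 'b"
  assumes fin: "finite (set_pmf X)"
    and same_law: "map_pmf p (replicate_pmf k X) = map_pmf q (replicate_pmf k X)"
    and blocks: "t * k \<le> n" and h_range: "\<And>d. 0 \<le> h d" "\<And>d. h d \<le> 1"
  shows "(\<Sum>b<t. measure_pmf.expectation (replicate_pmf m (replicate_pmf n X))
        (\<lambda>xs. h (map (\<lambda>x. (x, p (block k (b * k) x))) xs))
      - measure_pmf.expectation (replicate_pmf m (replicate_pmf n X))
        (\<lambda>xs. h (map (\<lambda>x. (x, q (block k (b * k) x))) xs)))
    \<le> real (card (p ` set_pmf (replicate_pmf k X) \<union> q ` set_pmf (replicate_pmf k X))) ^ m * sqrt t"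
proof -
  let ?R = "replicate_pmf m (replicate_pmf n X)"
  let ?D = "\<lambda>y b. label_discrepancy k p q (b * k) y"
  define L where "L = p ` set_pmf (replicate_pmf k X) \<union> q ` set_pmf (replicate_pmf k X)"
  define Y where "Y = {y. set y \<subseteq> L \<and> length y = m}"
  have int: "integrable ?R f" for f :: "_ \<Rightarrow> real"
    using fin by (intro integrable_measure_pmf_finite finite_set_replicate_pmf)
  have "finite L" unfolding L_def using finite_set_replicate_pmf[OF fin] by simp
  then have finite_Y: "finite Y" and card_Y: "card Y = card L ^ m"
    unfolding Y_def by (simp_all add: finite_lists_length_eq card_lists_length_eq)
  have labels_in_Y: "map (\<lambda>x. F (block k (b * k) x)) xs \<in> Y"
    if "xs \<in> set_pmf ?R" "b < t" "F \<in> {p, q}" for xs b F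
  proof -
    have "b * k + k \<le> n" using mult_add_le_mult_if_less[OF that(2), of k] blocks by linarith
    then have "map (\<lambda>x. F (block k (b * k) x)) xs
        \<in> {y. set y \<subseteq> F ` set_pmf (replicate_pmf k X) \<and> length y = m}"
      by (rule labels_of_block_in_lists[OF that(1)])
    moreover have "F ` set_pmf (replicate_pmf k X) \<subseteq> L" using that(3) unfolding L_def by blast
    ultimately show ?thesis unfolding Y_def by blast
  qed
  have pointwise: "(\<Sum>b<t. h (map (\<lambda>x. (x, p (block k (b * k) x))) xs)
        - h (map (\<lambda>x. (x, q (block k (b * k) x))) xs))
      \<le> (\<Sum>y\<in>Y. \<bar>\<Sum>b<t. ?D y b xs\<bar>)" if "xs \<in> set_pmf ?R" for xs
    by (rule sum_block_advantages_le_sum_abs_discrepancy[OF finite_Y labels_in_Y[OF that] h_range])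
  have "(\<Sum>b<t. measure_pmf.expectation ?R (\<lambda>xs. h (map (\<lambda>x. (x, p (block k (b * k) x))) xs))
      - measure_pmf.expectation ?R (\<lambda>xs. h (map (\<lambda>x. (x, q (block k (b * k) x))) xs)))
    = measure_pmf.expectation ?R (\<lambda>xs. \<Sum>b<t. h (map (\<lambda>x. (x, p (block k (b * k) x))) xs)
      - h (map (\<lambda>x. (x, q (block k (b * k) x))) xs))"
    by (simp add: int del: replicate_pmf.simps)
  also have "\<dots> \<le> measure_pmf.expectation ?R (\<lambda>xs. \<Sum>y\<in>Y. \<bar>\<Sum>b<t. ?D y b xs\<bar>)"
    using pointwise by (intro integral_mono_AE int) (simp add: AE_measure_pmf_iff del: replicate_pmf.simps)
  also have "\<dots> = (\<Sum>y\<in>Y. measure_pmf.expectation ?R (\<lambda>xs. \<bar>\<Sum>b<t. ?D y b xs\<bar>))"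
    by (simp add: int del: replicate_pmf.simps)
  also have "\<dots> \<le> (\<Sum>y\<in>Y. sqrt t)"
    using fin expectation_label_discrepancy_blocks_orthogonal[OF fin same_law blocks]
    by (intro sum_mono expectation_abs_sum_orthogonal_le_sqrt finite_set_replicate_pmf)
      (auto simp: Y_def label_discrepancy_def labels_indicator_def)
  finally show ?thesis by (simp add: card_Y L_def)
qed

lemma card_labels_le:
  assumes "finite (set_pmf X)"
  shows "card (p ` set_pmf (replicate_pmf k X) \<union> q ` set_pmf (replicate_pmf k X))
    \<le> 2 * card (set_pmf X) ^ k"
proof -
  let ?S = "set_pmf (replicate_pmf k X)"
  have "card (p ` ?S \<union> q ` ?S) \<le> card (p ` ?S) + card (q ` ?S)" by (rule card_Un_le)
  also have "\<dots> \<le> card ?S + card ?S" by (intro add_mono card_image_le finite_set_replicate_pmf assms)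
  finally show ?thesis using card_set_replicate_pmf[OF assms] by simp
qed

lemma le_square_if_le_mult_sqrt:
  fixes x c :: real
  assumes "0 \<le> x" "x \<le> c * sqrt x"
  shows "x \<le> c\<^sup>2"
proof (cases "x = 0")
  case False
  then have "0 < sqrt x" using assms(1) by simp
  moreover have "sqrt x * sqrt x \<le> sqrt x * c" using assms by (simp add: mult.commute)
  ultimately have "sqrt x \<le> c" by (simp only: mult_le_cancel_left_pos)
  then have "(sqrt x)\<^sup>2 \<le> c\<^sup>2" using \<open>0 < sqrt x\<close> by (intro power_mono) auto
  then show ?thesis using assms(1) by simp
qed simp

lemma distinguishes_imp_num_blocks_le:
  assumes fin: "finite (set_pmf X)"
    and same_law: "map_pmf p (replicate_pmf k X) = map_pmf q (replicate_pmf k X)"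
    and dist: "distinguishes m n k X p q A"
  shows "real (n div k) \<le> 9 * (2 * real (card (set_pmf X)) ^ k) ^ (2 * m)"
proof -
  define t where "t = n div k"
  define L where "L = real (card (p ` set_pmf (replicate_pmf k X) \<union> q ` set_pmf (replicate_pmf k X))) ^ m"
  have block_fits: "b * k + k \<le> n" if "b < t" for b
    using mult_add_le_mult_if_less[OF that, of k] div_times_less_eq_dividend[of n k]
    unfolding t_def by linarith
  have "real t / 3 = (\<Sum>b<t. 1/3)" by simp
  also have "\<dots> \<le> (\<Sum>b<t. measure_pmf.expectation (replicate_pmf m (replicate_pmf n X))
        (\<lambda>xs. pmf (A (map (\<lambda>x. (x, p (block k (b * k) x))) xs)) True)
      - measure_pmf.expectation (replicate_pmf m (replicate_pmf n X))
        (\<lambda>xs. pmf (A (map (\<lambda>x. (x, q (block k (b * k) x))) xs)) True))"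
    using block_fits by (intro sum_mono distinguishes_block_advantage[OF dist]) simp
  also have "\<dots> \<le> L * sqrt t"
    unfolding L_def by (rule sum_block_advantages_le[OF fin same_law]) (simp_all add: t_def pmf_le_1)
  finally have "t \<le> (3 * L)\<^sup>2" by (intro le_square_if_le_mult_sqrt) auto
  also have "\<dots> \<le> (3 * (2 * real (card (set_pmf X)) ^ k) ^ m)\<^sup>2"
  proof -
    have "real (card (p ` set_pmf (replicate_pmf k X) \<union> q ` set_pmf (replicate_pmf k X)))
        \<le> real (2 * card (set_pmf X) ^ k)"
      using card_labels_le[OF fin] by (simp only: of_nat_le_iff)
    then show ?thesis unfolding L_def by (intro power_mono mult_left_mono) simp_all
  qed
  finally show ?thesis by (simp add: t_def power_mult_distrib power_even_eq)
qed

lemma ln_le_of_num_blocks_le: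
  fixes B :: real
  assumes "1 < B" "0 < k" "(10 * k)\<^sup>2 \<le> n" "real (n div k) \<le> 9 * B ^ (2 * m)"
  shows "ln n / (4 * ln B) \<le> m"
proof -
  have B_pow: "1 \<le> B ^ (2 * m)" using assms(1) by simp
  have "(10 * real k)\<^sup>2 \<le> real n"
    using assms(3) by (metis of_nat_le_iff of_nat_mult of_nat_numeral of_nat_power)
  then have sqrt_n: "10 * real k \<le> sqrt n" by (rule real_le_rsqrt)
  have sqrt_n_pos: "0 < sqrt n" using sqrt_n assms(2) by (smt (verit) of_nat_0_less_iff)
  have "n < k * (n div k) + k"
    using assms(2) by (metis add_less_cancel_left div_mult_mod_eq mod_less_divisor mult.commute)
  then have "real n < real k * real (n div k) + k" by (metis of_nat_add of_nat_less_iff of_nat_mult)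
  also have "\<dots> \<le> 10 * real k * B ^ (2 * m)"
    using mult_left_mono[OF assms(4), of k] mult_left_mono[OF B_pow, of k] by (simp add: algebra_simps)
  also have "\<dots> \<le> sqrt n * B ^ (2 * m)"
    using sqrt_n B_pow by (intro mult_right_mono) auto
  finally have "sqrt n * sqrt n < sqrt n * B ^ (2 * m)" by simp
  then have "sqrt n < B ^ (2 * m)" using sqrt_n_pos by (simp only: mult_less_cancel_left_pos)
  then have "ln (sqrt n) < ln (B ^ (2 * m))" using sqrt_n_pos by (metis ln_less_cancel_iff less_trans)
  then have "ln n / 2 < 2 * m * ln B"
    using sqrt_n_pos assms(1) by (simp add: ln_sqrt ln_realpow)
  then show ?thesis using assms(1) by (simp add: field_simps)
qed

theorem theorem8p1:
  fixes k l :: nat and \<alpha> :: real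
  shows "\<exists>c>0. \<exists>N::nat. \<forall>(X::real pmf) (p::real list \<Rightarrow> real) (q::real list \<Rightarrow> real) n m A.
           finite (set_pmf X) \<and> card (set_pmf X) = l \<and> \<alpha> = Min (pmf X ` set_pmf X) \<and>
           map_pmf p (replicate_pmf k X) = map_pmf q (replicate_pmf k X) \<and>
           n \<ge> N \<and> distinguishes m n k X p q A
           \<longrightarrow> c * ln (real n) \<le> real m"
proof -
  (* The constants depend on k and l only;
     max 1 l keeps ln B positive even for the impossible case l = 0. *)
  define B where "B = 2 * real (max 1 l) ^ k"
  have "1 \<le> real (max 1 l) ^ k" by (intro one_le_power) simp
  then have "1 < B" unfolding B_def by linarith
  have "1 / (4 * ln B) * ln n \<le> m"
    if fin: "finite (set_pmf X)" and "card (set_pmf X) = l"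
      and same_law: "map_pmf p (replicate_pmf k X) = map_pmf q (replicate_pmf k X)"
      and "(10 * k)\<^sup>2 \<le> n" and dist: "distinguishes m n k X p q A"
    for X :: "real pmf" and p q :: "real list \<Rightarrow> real" and n m A
  proof -
    have "k \<noteq> 0" using not_distinguishes_arity_0 same_law dist by metis
    have "(2 * real l ^ k) ^ (2 * m) \<le> B ^ (2 * m)"
      unfolding B_def by (intro power_mono mult_left_mono) auto
    then have "real (n div k) \<le> 9 * B ^ (2 * m)"
      using distinguishes_imp_num_blocks_le[OF fin same_law dist] \<open>card (set_pmf X) = l\<close> by simp
    then show ?thesis
      using ln_le_of_num_blocks_le[OF \<open>1 < B\<close>] \<open>k \<noteq> 0\<close> \<open>(10 * k)\<^sup>2 \<le> n\<close> by simp
  qed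
  moreover have "0 < 1 / (4 * ln B)" using \<open>1 < B\<close> by simp
  ultimately show ?thesis by (intro exI[of _ "1 / (4 * ln B)"] conjI exI[of _ "(10 * k)\<^sup>2"]) auto
qed

end
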